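(* Let $p_0<0$, $\alpha\in(0,1)$, $\mathbb{S}:=\mathbb{R}/(2\pi\mathbb{Z})$, $\Omega:=\mathbb{S}\times(p_0,0)$, and let $N\ge3$ be an integer. Let $u_1,\dots,u_5$ be functions on $\overline\Omega$ with $\partial_q^n u_i\in C^\alpha(\overline\Omega)$ for all $0\le n\le N$ and $1\le i\le 5$. \begin{itemize} \item[(i)] If $L\ge1$ and $\|\partial_q^n u_i\|_\alpha\le L^{n-3/2}(n-2)!$ for all $2\le n\le N$ (and all $i$), then there exists a constant $C_0>1$ such that \[\|\partial_q^n(u_1u_2u_3u_4u_5)\|_\alpha\le C_0\Big(1+\sum_{i=1}^5\sum_{l=0}^1\|\partial_q^l u_i\|_\alpha\Big)^{16}L^{n-3/2}(n-2)!\quad\text{for all } 2\le n\le N.\] \item[(ii)] If $L\ge1$ and $\|\partial_q^n u_i\|_\alpha\le L^{n-1}(n-2)!$ for all $2\le n\le N$ (and all $i$), then there exists a constant $C_1>1$ such that \[\|\partial_q^n(u_1u_2u_3)\|_\alpha\le C_1\Big(1+\sum_{i=1}^3\sum_{l=0}^1\|\partial_q^l u_i\|_\alpha\Big)^{6}L^{n-1}(n-2)!\quad\text{for all } 2\le n\le N.\] \item[(iii)] If $L\ge1$ and $\|\partial_q^n u_i\|_\alpha\le L^{n-2}(n-3)!$ for all $3\le n\le N$ (and all $i$), then there exists a constant $C_2>1$ such that \[\|\partial_q^n(u_1u_2)\|_\alpha\le C_2\Big(1+\sum_{i=1}^2\sum_{l=0}^2\|\partial_q^l u_i\|_\alpha\Big)^{2}L^{n-2}(n-3)!\quad\text{for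 all } 3\le n\le N.\] \end{itemize} The constants $C_0$, $C_1$ and $C_2$ do not depend on $L$.
   Context: $\|\cdot\|_\alpha$ denotes the norm of the Hölder space $C^\alpha(\overline\Omega)$, normalized so that $\|uv\|_\alpha\le\|u\|_\alpha\|v\|_\alpha$. $\partial_q$ denotes differentiation with respect to the first variable $q\in\mathbb{S}$. *)

theory Defs
  imports "HOL-Analysis.Analysis"
begin

text \<open>Closed domain: points (q,p) with q in R (representing S = R/(2 pi Z)) and p in [p0,0].\<close>
definition omega_bar :: "real \<Rightarrow> (real \<times> real) set" where
  "omega_bar p0 = UNIV \<times> {p0..0}"

definition distS :: "real \<Rightarrow> real \<Rightarrow> real" where
  "distS q q' = (INF k::int. \<bar>q - q' - 2 * pi * of_int k\<bar>)"

definition distO :: "real \<times> real \<Rightarrow> real \<times> real \<Rightarrow> real" where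
  "distO x y = sqrt ((distS (fst x) (fst y))\<^sup>2 + (snd x - snd y)\<^sup>2)"

definition holder_quotients :: "real \<Rightarrow> real \<Rightarrow> (real \<times> real \<Rightarrow> real) \<Rightarrow> real set" where
  "holder_quotients \<alpha> p0 f =
     {\<bar>f x - f y\<bar> / (distO x y) powr \<alpha> | x y.
        x \<in> omega_bar p0 \<and> y \<in> omega_bar p0 \<and> distO x y \<noteq> 0}"

text \<open>f is a function on the closure of Omega = S x (p0,0) (2 pi-periodic in q) lying in
  the Hoelder space C^alpha: bounded with finite Hoelder seminorm.\<close>
definition in_holder :: "real \<Rightarrow> real \<Rightarrow> (real \<times> real \<Rightarrow> real) \<Rightarrow> bool" where
  "in_holder \<alpha> p0 f \<longleftrightarrow>
     (\<forall>q p. p \<in> {p0..0} \<longrightarrow> f (q + 2 * pi, p) = f (q, p)) \<and>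
     bdd_above ((\<lambda>x. \<bar>f x\<bar>) ` omega_bar p0) \<and>
     bdd_above (holder_quotients \<alpha> p0 f)"

text \<open>Hoelder norm: sup norm plus Hoelder seminorm (satisfies norm(uv) <= norm u * norm v).\<close>
definition holder_norm :: "real \<Rightarrow> real \<Rightarrow> (real \<times> real \<Rightarrow> real) \<Rightarrow> real" where
  "holder_norm \<alpha> p0 f =
     (SUP x \<in> omega_bar p0. \<bar>f x\<bar>) + Sup (holder_quotients \<alpha> p0 f)"

definition dq :: "nat \<Rightarrow> (real \<times> real \<Rightarrow> real) \<Rightarrow> real \<times> real \<Rightarrow> real" where
  "dq n f = (\<lambda>(q, p). (deriv ^^ n) (\<lambda>t. f (t, p)) q)"

definition q_diff :: "nat \<Rightarrow> real \<Rightarrow> (real \<times> real \<Rightarrow> real) \<Rightarrow> bool" where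
  "q_diff N p0 f \<longleftrightarrow>
     (\<forall>n < N. \<forall>q. \<forall>p \<in> {p0..0}.
        ((deriv ^^ n) (\<lambda>t. f (t, p)) has_real_derivative (deriv ^^ Suc n) (\<lambda>t. f (t, p)) q) (at q))"

definition admissible :: "real \<Rightarrow> real \<Rightarrow> nat \<Rightarrow> (real \<times> real \<Rightarrow> real) \<Rightarrow> bool" where
  "admissible \<alpha> p0 N f \<longleftrightarrow> q_diff N p0 f \<and> (\<forall>n \<le> N. in_holder \<alpha> p0 (dq n f))"

end

theory Submission
  imports Defs
begin

text \<open>By the Leibniz rule and the submultiplicativity of the Hoelder norm, bounds of the form
  \<open>\<parallel>\<partial>\<^sub>q\<^sup>k u\<parallel> \<le> K G(k) (k - d)!\<close> with \<open>d \<ge> 2\<close> and \<open>G\<close> supermultiplicative survive multiplication,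
  at the cost of the factor \<open>\<Sum>\<^sub>k (n choose k) (k - d)! (n - k - d)! / (n - d)!\<close>. This factor is bounded
  uniformly in \<open>n\<close>: writing it through falling factorials, the term with \<open>k \<le> n/2\<close> is at most a
  constant times \<open>1/((k + 1)(k + 2))\<close>, which is summable. Iterating over the factors gives the three
  estimates with \<open>G(k)\<close> equal to \<open>L\<^sup>k\<^sup>-\<^sup>3\<^sup>/\<^sup>2\<close>, \<open>L\<^sup>k\<^sup>-\<^sup>1\<close> and \<open>L\<^sup>k\<^sup>-\<^sup>2\<close>, the derivatives of order below \<open>d\<close>
  being bounded by the sum of the low-order norms.\<close>

section \<open>The Leibniz rule in the variable q\<close>

definition derivs_upto :: "nat \<Rightarrow> (real \<Rightarrow> real) \<Rightarrow> bool" where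
  "derivs_upto N F \<longleftrightarrow>
     (\<forall>m < N. \<forall>q. ((deriv ^^ m) F has_real_derivative (deriv ^^ Suc m) F q) (at q))"

lemma q_diff_iff_derivs_upto:
  "q_diff N p0 f \<longleftrightarrow> (\<forall>p \<in> {p0..0}. derivs_upto N (\<lambda>t. f (t, p)))"
  unfolding q_diff_def derivs_upto_def by blast

lemma Suc_choose_eq: "Suc n choose k = (n choose k) + (if k = 0 then 0 else n choose (k - 1))"
  by (cases k) simp_all

lemma leibniz_sum_Suc:
  fixes a b :: "nat \<Rightarrow> real"
  shows "(\<Sum>i=0..n. of_nat (n choose i) * (a (Suc i) * b (n - i) + a i * b (Suc (n - i))))
       = (\<Sum>i=0..Suc n. of_nat (Suc n choose i) * a i * b (Suc n - i))"
proof -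
  have "(\<Sum>i=0..Suc n. of_nat (Suc n choose i) * a i * b (Suc n - i))
      = (\<Sum>i=0..Suc n. of_nat (n choose i) * a i * b (Suc n - i))
      + (\<Sum>i=0..Suc n. (if i = 0 then 0 else of_nat (n choose (i - 1))) * a i * b (Suc n - i))"
    unfolding sum.distrib[symmetric] by (rule sum.cong) (auto simp: Suc_choose_eq algebra_simps)
  also have "(\<Sum>i=0..Suc n. of_nat (n choose i) * a i * b (Suc n - i))
      = (\<Sum>i=0..n. of_nat (n choose i) * a i * b (Suc (n - i)))"
    by (simp add: Suc_diff_le)
  also have "(\<Sum>i=0..Suc n. (if i = 0 then 0 else of_nat (n choose (i - 1))) * a i * b (Suc n - i))
      = (\<Sum>i=0..n. of_nat (n choose i) * a (Suc i) * b (n - i))"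
    by (subst sum.atLeast0_atMost_Suc_shift) simp
  finally show ?thesis by (simp add: sum.distrib[symmetric] algebra_simps)
qed

lemma has_real_derivative_leibniz_sum:
  assumes F: "derivs_upto N F" and G: "derivs_upto N G" and n: "n < N"
  shows "((\<lambda>t. \<Sum>i=0..n. of_nat (n choose i) * (deriv ^^ i) F t * (deriv ^^ (n - i)) G t)
     has_real_derivative
       (\<Sum>i=0..Suc n. of_nat (Suc n choose i) * (deriv ^^ i) F z * (deriv ^^ (Suc n - i)) G z)) (at z)"
proof -
  have "((\<lambda>t. \<Sum>i=0..n. of_nat (n choose i) * (deriv ^^ i) F t * (deriv ^^ (n - i)) G t)
     has_real_derivative (\<Sum>i=0..n. of_nat (n choose i) *
        ((deriv ^^ Suc i) F z * (deriv ^^ (n - i)) G z + (deriv ^^ i) F z * (deriv ^^ Suc (n - i)) G z))) (at z)"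
  proof (rule DERIV_sum)
    fix i assume "i \<in> {0..n}"
    then have "((deriv ^^ i) F has_real_derivative (deriv ^^ Suc i) F z) (at z)"
      and "((deriv ^^ (n - i)) G has_real_derivative (deriv ^^ Suc (n - i)) G z) (at z)"
      using F G n unfolding derivs_upto_def by auto
    then show "((\<lambda>t. of_nat (n choose i) * (deriv ^^ i) F t * (deriv ^^ (n - i)) G t)
        has_real_derivative of_nat (n choose i) *
          ((deriv ^^ Suc i) F z * (deriv ^^ (n - i)) G z + (deriv ^^ i) F z * (deriv ^^ Suc (n - i)) G z)) (at z)"
      by (auto intro!: derivative_eq_intros simp: algebra_simps)
  qed
  then show ?thesis
    by (simp only: leibniz_sum_Suc[where a = "\<lambda>i. (deriv ^^ i) F z" and b = "\<lambda>i. (deriv ^^ i) G z"])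
qed

lemma higher_deriv_mult_real:
  assumes F: "derivs_upto N F" and G: "derivs_upto N G" and n: "n \<le> N"
  shows "(deriv ^^ n) (\<lambda>t. F t * G t)
       = (\<lambda>t. \<Sum>i=0..n. of_nat (n choose i) * (deriv ^^ i) F t * (deriv ^^ (n - i)) G t)"
  using n
proof (induction n)
  case 0
  show ?case by (simp add: fun_eq_iff)
next
  case (Suc n)
  then have "(deriv ^^ Suc n) (\<lambda>t. F t * G t)
      = deriv (\<lambda>t. \<Sum>i=0..n. of_nat (n choose i) * (deriv ^^ i) F t * (deriv ^^ (n - i)) G t)"
    by simp
  also have "\<dots> = (\<lambda>t. \<Sum>i=0..Suc n. of_nat (Suc n choose i) * (deriv ^^ i) F t * (deriv ^^ (Suc n - i)) G t)"
    using Suc.prems by (intro ext DERIV_imp_deriv has_real_derivative_leibniz_sum[OF F G]) simp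
  finally show ?case .
qed

lemma derivs_upto_mult:
  assumes F: "derivs_upto N F" and G: "derivs_upto N G"
  shows "derivs_upto N (\<lambda>t. F t * G t)"
  unfolding derivs_upto_def
proof (intro allI impI)
  fix m q assume "m < N"
  then show "((deriv ^^ m) (\<lambda>t. F t * G t) has_real_derivative (deriv ^^ Suc m) (\<lambda>t. F t * G t) q) (at q)"
    using has_real_derivative_leibniz_sum[OF F G]
    by (simp only: higher_deriv_mult_real[OF F G] Suc_leI less_imp_le)
qed

lemma q_diff_mult: "q_diff N p0 f \<Longrightarrow> q_diff N p0 g \<Longrightarrow> q_diff N p0 (\<lambda>x. f x * g x)"
  unfolding q_diff_iff_derivs_upto using derivs_upto_mult by fast

lemma dq_mult:
  assumes "q_diff N p0 f" "q_diff N p0 g" "n \<le> N" "x \<in> omega_bar p0"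
  shows "dq n (\<lambda>x. f x * g x) x = (\<Sum>i=0..n. of_nat (n choose i) * (dq i f x * dq (n - i) g x))"
proof -
  obtain q p where x: "x = (q, p)" and p: "p \<in> {p0..0}"
    using assms(4) unfolding omega_bar_def by auto
  show ?thesis
    using assms(1,2) p higher_deriv_mult_real[OF _ _ assms(3)]
    unfolding x dq_def q_diff_iff_derivs_upto by (simp add: mult.assoc)
qed

section \<open>Algebra of the Hoelder norm\<close>

text \<open>\<open>holder_norm\<close> is a junk value unless both suprema are finite.\<close>

definition holder_bounded :: "real \<Rightarrow> real \<Rightarrow> (real \<times> real \<Rightarrow> real) \<Rightarrow> bool" where
  "holder_bounded \<alpha> p0 f \<longleftrightarrow>
     bdd_above ((\<lambda>x. \<bar>f x\<bar>) ` omega_bar p0) \<and> bdd_above (holder_quotients \<alpha> p0 f)"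

definition holder_sup :: "real \<Rightarrow> (real \<times> real \<Rightarrow> real) \<Rightarrow> real" where
  "holder_sup p0 f = (SUP x \<in> omega_bar p0. \<bar>f x\<bar>)"

definition holder_seminorm :: "real \<Rightarrow> real \<Rightarrow> (real \<times> real \<Rightarrow> real) \<Rightarrow> real" where
  "holder_seminorm \<alpha> p0 f = Sup (holder_quotients \<alpha> p0 f)"

lemma holder_norm_eq: "holder_norm \<alpha> p0 f = holder_sup p0 f + holder_seminorm \<alpha> p0 f"
  unfolding holder_norm_def holder_sup_def holder_seminorm_def ..

lemma in_holder_imp_holder_bounded: "in_holder \<alpha> p0 f \<Longrightarrow> holder_bounded \<alpha> p0 f"
  unfolding in_holder_def holder_bounded_def by auto

lemma omega_bar_nonempty: "p0 \<le> 0 \<Longrightarrow> (0, 0) \<in> omega_bar p0"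
  unfolding omega_bar_def by auto

lemma holder_quotients_nonempty:
  assumes "p0 < 0"
  shows "holder_quotients \<alpha> p0 f \<noteq> {}"
proof -
  have "distO (0, 0) (0, p0) \<noteq> 0"
    using assms unfolding distO_def by (simp add: add_nonneg_eq_0_iff)
  moreover have "(0, 0) \<in> omega_bar p0" "(0, p0) \<in> omega_bar p0"
    using assms unfolding omega_bar_def by auto
  ultimately show ?thesis unfolding holder_quotients_def by blast
qed

lemma abs_le_holder_sup:
  "holder_bounded \<alpha> p0 f \<Longrightarrow> x \<in> omega_bar p0 \<Longrightarrow> \<bar>f x\<bar> \<le> holder_sup p0 f"
  unfolding holder_sup_def holder_bounded_def by (intro cSUP_upper) auto

lemma holder_quotient_le_seminorm:
  assumes "holder_bounded \<alpha> p0 f" "x \<in> omega_bar p0" "y \<in> omega_bar p0" "distO x y \<noteq> 0"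
  shows "\<bar>f x - f y\<bar> / distO x y powr \<alpha> \<le> holder_seminorm \<alpha> p0 f"
proof -
  have "\<bar>f x - f y\<bar> / distO x y powr \<alpha> \<in> holder_quotients \<alpha> p0 f"
    using assms(2-4) unfolding holder_quotients_def by blast
  then show ?thesis
    using assms(1) unfolding holder_seminorm_def holder_bounded_def by (intro cSup_upper) auto
qed

lemma holder_sup_nonneg: "p0 \<le> 0 \<Longrightarrow> holder_bounded \<alpha> p0 f \<Longrightarrow> 0 \<le> holder_sup p0 f"
  using abs_le_holder_sup[OF _ omega_bar_nonempty] by force

lemma holder_seminorm_nonneg:
  assumes "p0 < 0" "holder_bounded \<alpha> p0 f"
  shows "0 \<le> holder_seminorm \<alpha> p0 f"
proof -
  obtain z where z: "z \<in> holder_quotients \<alpha> p0 f"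
    using holder_quotients_nonempty[OF assms(1)] by blast
  then have "0 \<le> z" unfolding holder_quotients_def by auto
  also have "z \<le> holder_seminorm \<alpha> p0 f"
    using z assms(2) unfolding holder_bounded_def holder_seminorm_def by (intro cSup_upper) auto
  finally show ?thesis .
qed

lemma holder_norm_nonneg: "p0 < 0 \<Longrightarrow> holder_bounded \<alpha> p0 f \<Longrightarrow> 0 \<le> holder_norm \<alpha> p0 f"
  unfolding holder_norm_eq using holder_sup_nonneg holder_seminorm_nonneg by fastforce

lemma holder_bounded_norm_le:
  assumes p0: "p0 < 0"
    and sup: "\<And>x. x \<in> omega_bar p0 \<Longrightarrow> \<bar>h x\<bar> \<le> a"
    and quot: "\<And>x y. x \<in> omega_bar p0 \<Longrightarrow> y \<in> omega_bar p0 \<Longrightarrow> distO x y \<noteq> 0 \<Longrightarrow>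
       \<bar>h x - h y\<bar> / distO x y powr \<alpha> \<le> b"
  shows "holder_bounded \<alpha> p0 h \<and> holder_norm \<alpha> p0 h \<le> a + b"
proof -
  have "bdd_above ((\<lambda>x. \<bar>h x\<bar>) ` omega_bar p0)"
    using sup by (intro bdd_aboveI[of _ a]) blast
  moreover have "bdd_above (holder_quotients \<alpha> p0 h)"
    using quot unfolding holder_quotients_def by (intro bdd_aboveI[of _ b]) blast
  moreover have "holder_sup p0 h \<le> a"
    unfolding holder_sup_def using sup omega_bar_nonempty[of p0] p0 by (intro cSUP_least) auto
  moreover have "holder_seminorm \<alpha> p0 h \<le> b"
    unfolding holder_seminorm_def
    using holder_quotients_nonempty[OF p0] quot unfolding holder_quotients_def
    by (intro cSup_least) auto
  ultimately show ?thesis unfolding holder_bounded_def holder_norm_eq by simp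
qed

lemma holder_norm_cong:
  assumes "\<And>x. x \<in> omega_bar p0 \<Longrightarrow> f x = g x"
  shows "holder_bounded \<alpha> p0 f = holder_bounded \<alpha> p0 g" "holder_norm \<alpha> p0 f = holder_norm \<alpha> p0 g"
proof -
  have sup: "(\<lambda>x. \<bar>f x\<bar>) ` omega_bar p0 = (\<lambda>x. \<bar>g x\<bar>) ` omega_bar p0"
    using assms by (auto simp: image_def)
  have quot: "holder_quotients \<alpha> p0 f = holder_quotients \<alpha> p0 g"
    unfolding holder_quotients_def by (intro Collect_cong) (metis assms)
  show "holder_bounded \<alpha> p0 f = holder_bounded \<alpha> p0 g"
    unfolding holder_bounded_def sup quot ..
  show "holder_norm \<alpha> p0 f = holder_norm \<alpha> p0 g"
    unfolding holder_norm_def quot using sup by (metis image_image)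
qed

lemma holder_norm_lincomb_le:
  assumes p0: "p0 < 0" and I: "finite I" and h: "\<And>i. i \<in> I \<Longrightarrow> holder_bounded \<alpha> p0 (h i)"
  shows "holder_bounded \<alpha> p0 (\<lambda>x. \<Sum>i\<in>I. c i * h i x)
    \<and> holder_norm \<alpha> p0 (\<lambda>x. \<Sum>i\<in>I. c i * h i x) \<le> (\<Sum>i\<in>I. \<bar>c i\<bar> * holder_norm \<alpha> p0 (h i))"
proof -
  have "holder_bounded \<alpha> p0 (\<lambda>x. \<Sum>i\<in>I. c i * h i x)
    \<and> holder_norm \<alpha> p0 (\<lambda>x. \<Sum>i\<in>I. c i * h i x)
      \<le> (\<Sum>i\<in>I. \<bar>c i\<bar> * holder_sup p0 (h i)) + (\<Sum>i\<in>I. \<bar>c i\<bar> * holder_seminorm \<alpha> p0 (h i))"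
  proof (rule holder_bounded_norm_le[OF p0])
    fix x assume x: "x \<in> omega_bar p0"
    have "\<bar>\<Sum>i\<in>I. c i * h i x\<bar> \<le> (\<Sum>i\<in>I. \<bar>c i\<bar> * \<bar>h i x\<bar>)"
      by (rule order_trans[OF sum_abs]) (simp add: abs_mult)
    also have "\<dots> \<le> (\<Sum>i\<in>I. \<bar>c i\<bar> * holder_sup p0 (h i))"
      using abs_le_holder_sup[OF h x] by (intro sum_mono mult_left_mono) auto
    finally show "\<bar>\<Sum>i\<in>I. c i * h i x\<bar> \<le> (\<Sum>i\<in>I. \<bar>c i\<bar> * holder_sup p0 (h i))" .
  next
    fix x y assume xy: "x \<in> omega_bar p0" "y \<in> omega_bar p0" "distO x y \<noteq> 0"
    define D where "D = distO x y powr \<alpha>"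
    have "0 < D" using xy(3) unfolding D_def distO_def by simp
    have "\<bar>(\<Sum>i\<in>I. c i * h i x) - (\<Sum>i\<in>I. c i * h i y)\<bar> \<le> (\<Sum>i\<in>I. \<bar>c i\<bar> * \<bar>h i x - h i y\<bar>)"
      unfolding sum_subtractf[symmetric]
      by (rule order_trans[OF sum_abs]) (simp add: abs_mult right_diff_distrib[symmetric])
    then have "\<bar>(\<Sum>i\<in>I. c i * h i x) - (\<Sum>i\<in>I. c i * h i y)\<bar> / D
        \<le> (\<Sum>i\<in>I. \<bar>c i\<bar> * (\<bar>h i x - h i y\<bar> / D))"
      using \<open>0 < D\<close> by (simp add: divide_right_mono sum_divide_distrib[symmetric])
    also have "\<dots> \<le> (\<Sum>i\<in>I. \<bar>c i\<bar> * holder_seminorm \<alpha> p0 (h i))"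
      using holder_quotient_le_seminorm[OF h xy] unfolding D_def by (intro sum_mono mult_left_mono) auto
    finally show "\<bar>(\<Sum>i\<in>I. c i * h i x) - (\<Sum>i\<in>I. c i * h i y)\<bar> / distO x y powr \<alpha>
        \<le> (\<Sum>i\<in>I. \<bar>c i\<bar> * holder_seminorm \<alpha> p0 (h i))" unfolding D_def .
  qed
  then show ?thesis by (simp add: holder_norm_eq distrib_left sum.distrib)
qed

lemma holder_norm_mult_le:
  assumes p0: "p0 < 0" and f: "holder_bounded \<alpha> p0 f" and g: "holder_bounded \<alpha> p0 g"
  shows "holder_bounded \<alpha> p0 (\<lambda>x. f x * g x)
    \<and> holder_norm \<alpha> p0 (\<lambda>x. f x * g x) \<le> holder_norm \<alpha> p0 f * holder_norm \<alpha> p0 g"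
proof -
  let ?sf = "holder_sup p0 f" and ?sg = "holder_sup p0 g"
  let ?qf = "holder_seminorm \<alpha> p0 f" and ?qg = "holder_seminorm \<alpha> p0 g"
  have nonneg: "0 \<le> ?sf" "0 \<le> ?sg" "0 \<le> ?qf" "0 \<le> ?qg"
    using holder_sup_nonneg holder_seminorm_nonneg p0 f g by fastforce+
  have "holder_bounded \<alpha> p0 (\<lambda>x. f x * g x)
    \<and> holder_norm \<alpha> p0 (\<lambda>x. f x * g x) \<le> ?sf * ?sg + (?sf * ?qg + ?sg * ?qf)"
  proof (rule holder_bounded_norm_le[OF p0])
    fix x assume "x \<in> omega_bar p0"
    then show "\<bar>f x * g x\<bar> \<le> ?sf * ?sg"
      using abs_le_holder_sup[OF f] abs_le_holder_sup[OF g] nonneg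
      by (simp add: abs_mult mult_mono)
  next
    fix x y assume xy: "x \<in> omega_bar p0" "y \<in> omega_bar p0" "distO x y \<noteq> 0"
    define D where "D = distO x y powr \<alpha>"
    have "0 < D" using xy(3) unfolding D_def distO_def by simp
    have "\<bar>f x * g x - f y * g y\<bar> = \<bar>f x * (g x - g y) + g y * (f x - f y)\<bar>"
      by (simp add: algebra_simps)
    also have "\<dots> \<le> \<bar>f x\<bar> * \<bar>g x - g y\<bar> + \<bar>g y\<bar> * \<bar>f x - f y\<bar>"
      by (simp add: abs_mult abs_triangle_ineq[THEN order_trans])
    finally have "\<bar>f x * g x - f y * g y\<bar> / D \<le> \<bar>f x\<bar> * (\<bar>g x - g y\<bar> / D) + \<bar>g y\<bar> * (\<bar>f x - f y\<bar> / D)"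
      using \<open>0 < D\<close> by (simp add: divide_right_mono add_divide_distrib[symmetric])
    also have "\<dots> \<le> ?sf * ?qg + ?sg * ?qf"
      using holder_quotient_le_seminorm[OF f xy] holder_quotient_le_seminorm[OF g xy]
        abs_le_holder_sup[OF f xy(1)] abs_le_holder_sup[OF g xy(2)] nonneg
      unfolding D_def by (intro add_mono mult_mono) auto
    finally show "\<bar>f x * g x - f y * g y\<bar> / distO x y powr \<alpha> \<le> ?sf * ?qg + ?sg * ?qf"
      unfolding D_def .
  qed
  moreover have "?sf * ?sg + (?sf * ?qg + ?sg * ?qf) \<le> holder_norm \<alpha> p0 f * holder_norm \<alpha> p0 g"
    unfolding holder_norm_eq using nonneg by (simp add: algebra_simps)
  ultimately show ?thesis by linarith
qed

lemma holder_norm_dq_mult_le: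
  assumes p0: "p0 < 0" and qf: "q_diff N p0 f" and qg: "q_diff N p0 g" and k: "k \<le> N"
    and bf: "\<And>i. i \<le> k \<Longrightarrow> holder_bounded \<alpha> p0 (dq i f)"
    and bg: "\<And>i. i \<le> k \<Longrightarrow> holder_bounded \<alpha> p0 (dq i g)"
  shows "holder_bounded \<alpha> p0 (dq k (\<lambda>x. f x * g x))
    \<and> holder_norm \<alpha> p0 (dq k (\<lambda>x. f x * g x))
      \<le> (\<Sum>i=0..k. real (k choose i) * (holder_norm \<alpha> p0 (dq i f) * holder_norm \<alpha> p0 (dq (k - i) g)))"
proof -
  define h where "h i x = dq i f x * dq (k - i) g x" for i x
  have h: "holder_bounded \<alpha> p0 (h i)
      \<and> holder_norm \<alpha> p0 (h i) \<le> holder_norm \<alpha> p0 (dq i f) * holder_norm \<alpha> p0 (dq (k - i) g)"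
    if "i \<in> {0..k}" for i
    unfolding h_def using that by (intro holder_norm_mult_le[OF p0] bf bg) auto
  have lincomb: "holder_bounded \<alpha> p0 (\<lambda>x. \<Sum>i=0..k. real (k choose i) * h i x)
    \<and> holder_norm \<alpha> p0 (\<lambda>x. \<Sum>i=0..k. real (k choose i) * h i x)
      \<le> (\<Sum>i=0..k. \<bar>real (k choose i)\<bar> * holder_norm \<alpha> p0 (h i))"
    by (rule holder_norm_lincomb_le[OF p0]) (use h in auto)
  have "(\<Sum>i=0..k. \<bar>real (k choose i)\<bar> * holder_norm \<alpha> p0 (h i))
      \<le> (\<Sum>i=0..k. real (k choose i) * (holder_norm \<alpha> p0 (dq i f) * holder_norm \<alpha> p0 (dq (k - i) g)))"
    using h by (intro sum_mono mult_left_mono) auto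
  moreover have eq: "dq k (\<lambda>x. f x * g x) x = (\<Sum>i=0..k. real (k choose i) * h i x)"
    if "x \<in> omega_bar p0" for x
    unfolding h_def using dq_mult[OF qf qg k that] .
  have "holder_bounded \<alpha> p0 (dq k (\<lambda>x. f x * g x)) = holder_bounded \<alpha> p0 (\<lambda>x. \<Sum>i=0..k. real (k choose i) * h i x)"
    by (rule holder_norm_cong(1)) (rule eq)
  moreover have "holder_norm \<alpha> p0 (dq k (\<lambda>x. f x * g x)) = holder_norm \<alpha> p0 (\<lambda>x. \<Sum>i=0..k. real (k choose i) * h i x)"
    by (rule holder_norm_cong(2)) (rule eq)
  ultimately show ?thesis using lincomb by auto
qed

section \<open>A convolution inequality for shifted factorials\<close>

text \<open>The factors \<open>max (m - j) 1\<close> also cover \<open>m < d\<close>, where \<open>fact (m - d) = 0! = 1\<close>.\<close>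

lemma fact_div_fact_diff_eq_prod:
  "fact m / fact (m - d) = (\<Prod>j<d. real (max (m - j) 1))"
proof (induction d)
  case 0
  show ?case by simp
next
  case (Suc d)
  have "fact (m - d) = real (max (m - d) 1) * fact (m - Suc d)"
  proof (cases "d < m")
    case True
    then have "m - d = Suc (m - Suc d)" by (simp only: Suc_diff_Suc)
    then show ?thesis by (simp only: fact_Suc) simp
  qed simp
  then have "fact m / fact (m - Suc d) = fact m / fact (m - d) * real (max (m - d) 1)"
    by simp
  then show ?case using Suc.IH by simp
qed

lemma max_diff_one_le_halves:
  assumes "2 * k \<le> n"
  shows "max (n - j) 1 \<le> 2 * (j + 1) * max (n - k - j) (1::nat)"
proof (cases "j < n - k")
  case True
  have "1 \<le> n - k - j" using True by arith
  then have "j \<le> j * (n - k - j)" using mult_le_mono2[of 1 "n - k - j" j] by simp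
  moreover have "n - j \<le> 2 * (n - k - j) + 2 * j" using assms True by arith
  ultimately have "n - j \<le> 2 * ((n - k - j) + j * (n - k - j))" by (simp only: add_mult_distrib2)
  then show ?thesis using True by (simp add: algebra_simps)
next
  case False
  then show ?thesis using assms by simp
qed

lemma fact_div_fact_diff_le_halves:
  assumes "2 * k \<le> n"
  shows "fact n / fact (n - d) \<le> (2 ^ d * fact d * (fact (n - k) / fact (n - k - d)) :: real)"
proof -
  have "real (max (n - j) 1) \<le> 2 * (real j + 1) * real (max (n - k - j) 1)" for j
  proof -
    have "real (max (n - j) 1) \<le> real (2 * (j + 1) * max (n - k - j) 1)"
      by (simp only: of_nat_le_iff max_diff_one_le_halves[OF assms])
    then show ?thesis by (simp add: algebra_simps)
  qed
  then have "(\<Prod>j<d. real (max (n - j) 1)) \<le> (\<Prod>j<d. 2 * (real j + 1) * real (max (n - k - j) 1))"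
    by (intro prod_mono) simp
  also have "\<dots> = (\<Prod>j<d. 2) * (\<Prod>j<d. real j + 1) * (\<Prod>j<d. real (max (n - k - j) 1))"
    by (simp only: prod.distrib)
  also have "(\<Prod>j<d. 2) = (2::real) ^ d"
    by simp
  also have "(\<Prod>j<d. real j + 1) = fact d"
    by (simp add: fact_prod_Suc lessThan_atLeast0 add.commute)
  finally show ?thesis unfolding fact_div_fact_diff_eq_prod .
qed

lemma fact_div_fact_diff_ge_quadratic:
  assumes "2 \<le> d"
  shows "(real k + 1) * (real k + 2) \<le> 6 * (fact k / fact (k - d))"
proof -
  have split: "{..<d} = {..<2} \<union> {2..<d}" using assms by auto
  have "(\<Prod>j<d. real (max (k - j) 1)) = real (max k 1) * real (max (k - 1) 1) * (\<Prod>j\<in>{2..<d}. real (max (k - j) 1))"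
    unfolding split by (subst prod.union_disjoint) (auto simp: eval_nat_numeral lessThan_Suc)
  moreover have "1 \<le> (\<Prod>j\<in>{2..<d}. real (max (k - j) 1))"
    by (intro prod_ge_1) auto
  moreover have "(real k + 1) * (real k + 2) \<le> 6 * (real (max k 1) * real (max (k - 1) 1))"
  proof (cases "k \<le> 1")
    case True
    then show ?thesis by (cases k) auto
  next
    case False
    then have "real (max k 1) = real k" "real (max (k - 1) 1) = real k - 1" by auto
    moreover have "0 \<le> (real k - 2) * (5 * real k + 1)" using False by simp
    ultimately show ?thesis by (simp add: algebra_simps)
  qed
  moreover have "0 \<le> real (max k 1) * real (max (k - 1) 1)" by simp
  ultimately show ?thesis
    unfolding fact_div_fact_diff_eq_prod
    using mult_left_mono[of 1 "\<Prod>j\<in>{2..<d}. real (max (k - j) 1)" "real (max k 1) * real (max (k - 1) 1)"]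
    by linarith
qed

lemma binomial_fact_diff_le:
  assumes d: "2 \<le> d" and k: "2 * k \<le> n"
  shows "real (n choose k) * fact (k - d) * fact (n - k - d)
    \<le> 6 * 2 ^ d * fact d * fact (n - d) / ((real k + 1) * (real k + 2))"
proof -
  define A where "A = (fact n / fact (n - d) :: real)"
  define B where "B = (fact k / fact (k - d) :: real)"
  define C where "C = (fact (n - k) / fact (n - k - d) :: real)"
  have pos: "0 < B" "0 < C" unfolding B_def C_def by simp_all
  have "real (n choose k) * fact (k - d) * fact (n - k - d) = fact (n - d) * A / (B * C)"
    using k unfolding A_def B_def C_def by (simp add: binomial_fact field_simps)
  also have "\<dots> \<le> fact (n - d) * (2 ^ d * fact d * C) / (B * C)"
  proof -
    have "A \<le> 2 ^ d * fact d * C"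
      unfolding A_def C_def by (rule fact_div_fact_diff_le_halves[OF k])
    then show ?thesis using pos by (intro divide_right_mono mult_left_mono) simp_all
  qed
  also have "\<dots> = 2 ^ d * fact d * fact (n - d) / B"
    using pos by (simp add: field_simps)
  also have "\<dots> \<le> 2 ^ d * fact d * fact (n - d) / ((real k + 1) * (real k + 2) / 6)"
    using fact_div_fact_diff_ge_quadratic[OF d, of k] unfolding B_def
    by (intro divide_left_mono) (simp_all add: mult.commute)
  finally show ?thesis by (simp add: field_simps)
qed

lemma sum_inverse_consecutive_le_one: "(\<Sum>k=0..n. 1 / ((real k + 1) * (real k + 2))) \<le> 1"
proof -
  have "(\<Sum>k=0..n. 1 / ((real k + 1) * (real k + 2)))
      = - (\<Sum>k=0..n. 1 / (real (Suc k) + 1) - 1 / (real k + 1))"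
    by (simp add: sum_negf[symmetric] field_simps)
  also have "\<dots> = 1 - 1 / (real (Suc n) + 1)"
    by (subst sum_Suc_diff) auto
  finally show ?thesis by simp
qed

lemma binomial_fact_diff_convolution_le:
  assumes d: "2 \<le> d"
  shows "(\<Sum>k=0..n. real (n choose k) * fact (k - d) * fact (n - k - d))
    \<le> 12 * 2 ^ d * fact d * fact (n - d)"
proof -
  define c where "c = (6 * 2 ^ d * fact d * fact (n - d) :: real)"
  define h where "h k = 1 / ((real k + 1) * (real k + 2))" for k :: nat
  have c_h: "c * h k = 6 * 2 ^ d * fact d * fact (n - d) / ((real k + 1) * (real k + 2))" for k
    unfolding c_def h_def by simp
  have nonneg: "0 \<le> c" "0 \<le> h k" for k
    unfolding c_def h_def by simp_all
  have each: "real (n choose k) * fact (k - d) * fact (n - k - d) \<le> c * (h k + h (n - k))"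
    if "k \<le> n" for k
  proof (cases "2 * k \<le> n")
    case True
    then have "real (n choose k) * fact (k - d) * fact (n - k - d) \<le> c * h k"
      unfolding c_h by (rule binomial_fact_diff_le[OF d])
    also have "\<dots> \<le> c * (h k + h (n - k))"
      using nonneg by (intro mult_left_mono) auto
    finally show ?thesis .
  next
    case False
    have "n choose k = n choose (n - k)" by (rule binomial_symmetric[OF that])
    moreover have "n - (n - k) = k" using that by simp
    ultimately have "real (n choose k) * fact (k - d) * fact (n - k - d)
        = real (n choose (n - k)) * fact (n - k - d) * fact (n - (n - k) - d)"
      by simp
    also have "\<dots> \<le> c * h (n - k)"
      unfolding c_h using False by (intro binomial_fact_diff_le[OF d]) simp
    also have "\<dots> \<le> c * (h k + h (n - k))"
      using nonneg by (intro mult_left_mono) auto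
    finally show ?thesis .
  qed
  have "(\<Sum>k=0..n. real (n choose k) * fact (k - d) * fact (n - k - d)) \<le> (\<Sum>k=0..n. c * (h k + h (n - k)))"
    using each by (intro sum_mono) auto
  also have "\<dots> = c * ((\<Sum>k=0..n. h k) + (\<Sum>k=0..n. h (n - k)))"
    by (simp add: sum_distrib_left[symmetric] sum.distrib)
  also have "(\<Sum>k=0..n. h (n - k)) = (\<Sum>k=0..n. h k)"
    using sum.atLeastAtMost_rev[of h 0 n] by simp
  also have "c * ((\<Sum>k=0..n. h k) + (\<Sum>k=0..n. h k)) \<le> c * 2"
    using sum_inverse_consecutive_le_one[of n] unfolding h_def c_def
    by (intro mult_left_mono) auto
  finally show ?thesis unfolding c_def by simp
qed

section \<open>Products of functions with factorially growing derivatives\<close>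

definition dq_norms_le ::
    "real \<Rightarrow> real \<Rightarrow> nat \<Rightarrow> (nat \<Rightarrow> real) \<Rightarrow> real \<Rightarrow> (real \<times> real \<Rightarrow> real) \<Rightarrow> bool" where
  "dq_norms_le \<alpha> p0 N W K f \<longleftrightarrow> q_diff N p0 f \<and>
     (\<forall>k \<le> N. holder_bounded \<alpha> p0 (dq k f) \<and> holder_norm \<alpha> p0 (dq k f) \<le> K * W k)"

lemma dq_norms_le_mult:
  assumes p0: "p0 < 0"
    and conv: "\<And>n. n \<le> N \<Longrightarrow> (\<Sum>i=0..n. real (n choose i) * W i * W (n - i)) \<le> c * W n"
    and f: "dq_norms_le \<alpha> p0 N W Kf f" and g: "dq_norms_le \<alpha> p0 N W Kg g"
    and Kf: "0 \<le> Kf" and Kg: "0 \<le> Kg"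
  shows "dq_norms_le \<alpha> p0 N W (c * Kf * Kg) (\<lambda>x. f x * g x)"
  unfolding dq_norms_le_def
proof (intro conjI allI impI)
  have qf: "q_diff N p0 f" and qg: "q_diff N p0 g"
    and bf: "\<And>i. i \<le> N \<Longrightarrow> holder_bounded \<alpha> p0 (dq i f) \<and> holder_norm \<alpha> p0 (dq i f) \<le> Kf * W i"
    and bg: "\<And>i. i \<le> N \<Longrightarrow> holder_bounded \<alpha> p0 (dq i g) \<and> holder_norm \<alpha> p0 (dq i g) \<le> Kg * W i"
    using f g unfolding dq_norms_le_def by auto
  then show "q_diff N p0 (\<lambda>x. f x * g x)" by (intro q_diff_mult)
  fix k assume k: "k \<le> N"
  have leibniz: "holder_bounded \<alpha> p0 (dq k (\<lambda>x. f x * g x))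
    \<and> holder_norm \<alpha> p0 (dq k (\<lambda>x. f x * g x))
      \<le> (\<Sum>i=0..k. real (k choose i) * (holder_norm \<alpha> p0 (dq i f) * holder_norm \<alpha> p0 (dq (k - i) g)))"
    by (rule holder_norm_dq_mult_le[OF p0 qf qg k]) (use bf bg k in auto)
  then show "holder_bounded \<alpha> p0 (dq k (\<lambda>x. f x * g x))" ..
  have "holder_norm \<alpha> p0 (dq i f) * holder_norm \<alpha> p0 (dq (k - i) g) \<le> (Kf * W i) * (Kg * W (k - i))"
    if "i \<le> k" for i
  proof -
    have "i \<le> N" "k - i \<le> N" using that k by auto
    then have "0 \<le> holder_norm \<alpha> p0 (dq i f)" "holder_norm \<alpha> p0 (dq i f) \<le> Kf * W i"
      "0 \<le> holder_norm \<alpha> p0 (dq (k - i) g)" "holder_norm \<alpha> p0 (dq (k - i) g) \<le> Kg * W (k - i)"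
      using bf bg holder_norm_nonneg[OF p0] by blast+
    then show ?thesis by (intro mult_mono) auto
  qed
  then have "(\<Sum>i=0..k. real (k choose i) * (holder_norm \<alpha> p0 (dq i f) * holder_norm \<alpha> p0 (dq (k - i) g)))
      \<le> (\<Sum>i=0..k. real (k choose i) * ((Kf * W i) * (Kg * W (k - i))))"
    by (intro sum_mono mult_left_mono) auto
  also have "\<dots> = Kf * Kg * (\<Sum>i=0..k. real (k choose i) * W i * W (k - i))"
    by (simp add: sum_distrib_left algebra_simps)
  also have "\<dots> \<le> Kf * Kg * (c * W k)"
    using conv[OF k] Kf Kg by (intro mult_left_mono) auto
  finally show "holder_norm \<alpha> p0 (dq k (\<lambda>x. f x * g x)) \<le> c * Kf * Kg * W k"
    using leibniz by (simp add: algebra_simps)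
qed

lemma dq_norms_le_prod:
  assumes p0: "p0 < 0"
    and conv: "\<And>n. n \<le> N \<Longrightarrow> (\<Sum>i=0..n. real (n choose i) * W i * W (n - i)) \<le> c * W n"
    and c: "0 \<le> c" and K: "0 \<le> K"
    and I: "finite I" "I \<noteq> {}" and u: "\<And>i. i \<in> I \<Longrightarrow> dq_norms_le \<alpha> p0 N W K (u i)"
  shows "dq_norms_le \<alpha> p0 N W (c ^ (card I - 1) * K ^ card I) (\<lambda>x. \<Prod>i\<in>I. u i x)"
  using I u
proof (induction I rule: finite_ne_induct)
  case (singleton a)
  then show ?case by simp
next
  case (insert a F)
  have "card F \<noteq> 0" using insert.hyps by simp
  then obtain m where m: "card F = Suc m" using not0_implies_Suc by blast
  have "dq_norms_le \<alpha> p0 N W (c * K * (c ^ (card F - 1) * K ^ card F)) (\<lambda>x. u a x * (\<Prod>i\<in>F. u i x))"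
    using insert c K by (intro dq_norms_le_mult[OF p0 conv]) auto
  then show ?case using insert.hyps m by (simp add: algebra_simps)
qed

lemma fact_weight_convolution_le:
  assumes d: "2 \<le> d" and G: "\<And>k. 0 \<le> G k" "\<And>i j. G i * G j \<le> G (i + j)"
  shows "(\<Sum>i=0..n. real (n choose i) * (G i * fact (i - d)) * (G (n - i) * fact (n - i - d)))
    \<le> (12 * 2 ^ d * fact d) * (G n * fact (n - d))"
proof -
  have "(\<Sum>i=0..n. real (n choose i) * (G i * fact (i - d)) * (G (n - i) * fact (n - i - d)))
      \<le> (\<Sum>i=0..n. G n * (real (n choose i) * fact (i - d) * fact (n - i - d)))"
  proof (intro sum_mono)
    fix i assume "i \<in> {0..n}"
    then have "G i * G (n - i) \<le> G n" using G(2)[of i "n - i"] by simp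
    then have "(G i * G (n - i)) * (real (n choose i) * fact (i - d) * fact (n - i - d))
        \<le> G n * (real (n choose i) * fact (i - d) * fact (n - i - d))"
      by (rule mult_right_mono) simp
    then show "real (n choose i) * (G i * fact (i - d)) * (G (n - i) * fact (n - i - d))
        \<le> G n * (real (n choose i) * fact (i - d) * fact (n - i - d))"
      by (simp only: mult_ac)
  qed
  also have "\<dots> \<le> G n * (12 * 2 ^ d * fact d * fact (n - d))"
    unfolding sum_distrib_left[symmetric]
    using binomial_fact_diff_convolution_le[OF d] G(1) by (rule mult_left_mono)
  finally show ?thesis by (simp add: algebra_simps)
qed

lemma holder_norm_le_one_plus_sum:
  assumes p0: "p0 < 0" and I: "finite I"
    and bounded: "\<And>i l. i \<in> I \<Longrightarrow> l \<le> r \<Longrightarrow> holder_bounded \<alpha> p0 (dq l (u i))"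
  shows "1 \<le> 1 + (\<Sum>i\<in>I. \<Sum>l\<le>r. holder_norm \<alpha> p0 (dq l (u i)))"
    and "i \<in> I \<Longrightarrow> l \<le> r \<Longrightarrow>
      holder_norm \<alpha> p0 (dq l (u i)) \<le> 1 + (\<Sum>i\<in>I. \<Sum>l\<le>r. holder_norm \<alpha> p0 (dq l (u i)))"
proof -
  have nonneg: "0 \<le> holder_norm \<alpha> p0 (dq l (u i))" if "i \<in> I" "l \<le> r" for i l
    using holder_norm_nonneg[OF p0 bounded[OF that]] .
  then have inner: "0 \<le> (\<Sum>l\<le>r. holder_norm \<alpha> p0 (dq l (u i)))" if "i \<in> I" for i
    using that by (intro sum_nonneg) auto
  then show "1 \<le> 1 + (\<Sum>i\<in>I. \<Sum>l\<le>r. holder_norm \<alpha> p0 (dq l (u i)))"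
    by (simp add: sum_nonneg)
  assume i: "i \<in> I" and l: "l \<le> r"
  have "holder_norm \<alpha> p0 (dq l (u i)) \<le> (\<Sum>l\<le>r. holder_norm \<alpha> p0 (dq l (u i)))"
    using nonneg i l by (intro member_le_sum) auto
  also have "\<dots> \<le> (\<Sum>i\<in>I. \<Sum>l\<le>r. holder_norm \<alpha> p0 (dq l (u i)))"
    using inner i I by (intro member_le_sum) auto
  finally show "holder_norm \<alpha> p0 (dq l (u i)) \<le> 1 + (\<Sum>i\<in>I. \<Sum>l\<le>r. holder_norm \<alpha> p0 (dq l (u i)))"
    by simp
qed

lemma admissible_dq_norms_le_fact_weight:
  assumes adm: "admissible \<alpha> p0 N f" and S: "1 \<le> S" and G: "\<And>k. 1 \<le> G k"
    and low: "\<And>k. k < d \<Longrightarrow> k \<le> N \<Longrightarrow> holder_norm \<alpha> p0 (dq k f) \<le> S"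
    and high: "\<And>k. d \<le> k \<Longrightarrow> k \<le> N \<Longrightarrow> holder_norm \<alpha> p0 (dq k f) \<le> G k * fact (k - d)"
  shows "dq_norms_le \<alpha> p0 N (\<lambda>k. G k * fact (k - d)) S f"
  unfolding dq_norms_le_def
proof (intro conjI allI impI)
  show "q_diff N p0 f" using adm unfolding admissible_def by simp
  fix k assume k: "k \<le> N"
  show "holder_bounded \<alpha> p0 (dq k f)"
    using adm k unfolding admissible_def by (auto intro: in_holder_imp_holder_bounded)
  have W: "1 \<le> G k * fact (k - d)"
    using mult_mono[OF G[of k] fact_ge_1[of "k - d"]] G[of k] by simp
  show "holder_norm \<alpha> p0 (dq k f) \<le> S * (G k * fact (k - d))"
  proof (cases "k < d")
    case True
    have "S * 1 \<le> S * (G k * fact (k - d))" using W S by (intro mult_left_mono) auto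
    then show ?thesis using low[OF True k] by linarith
  next
    case False
    have "1 * (G k * fact (k - d)) \<le> S * (G k * fact (k - d))" using W S by (intro mult_right_mono) auto
    then show ?thesis using high[of k] k False by linarith
  qed
qed

lemma holder_norm_dq_prod_le:
  fixes G :: "nat \<Rightarrow> real"
  assumes p0: "p0 < 0" and d: "2 \<le> d" "d \<le> Suc r" and r: "r \<le> N" and I: "finite I" "I \<noteq> {}"
    and G: "\<And>k. 1 \<le> G k" "\<And>i j. G i * G j \<le> G (i + j)"
    and adm: "\<And>i. i \<in> I \<Longrightarrow> admissible \<alpha> p0 N (u i)"
    and high: "\<And>i k. i \<in> I \<Longrightarrow> d \<le> k \<Longrightarrow> k \<le> N \<Longrightarrow> holder_norm \<alpha> p0 (dq k (u i)) \<le> G k * fact (k - d)"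
    and n: "n \<le> N"
  shows "holder_norm \<alpha> p0 (dq n (\<lambda>x. \<Prod>i\<in>I. u i x))
    \<le> (12 * 2 ^ d * fact d) ^ (card I - 1) * (1 + (\<Sum>i\<in>I. \<Sum>l\<le>r. holder_norm \<alpha> p0 (dq l (u i)))) ^ card I
      * (G n * fact (n - d))"
proof -
  define S where "S = 1 + (\<Sum>i\<in>I. \<Sum>l\<le>r. holder_norm \<alpha> p0 (dq l (u i)))"
  define W where "W k = G k * fact (k - d)" for k
  have bounded: "holder_bounded \<alpha> p0 (dq l (u i))" if "i \<in> I" "l \<le> r" for i l
    using adm[OF that(1)] that(2) r unfolding admissible_def by (auto intro: in_holder_imp_holder_bounded)
  have S1: "1 \<le> S"
    unfolding S_def by (rule holder_norm_le_one_plus_sum(1)[OF p0 I(1)]) (fact bounded)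
  have S_ge: "holder_norm \<alpha> p0 (dq l (u i)) \<le> S" if "i \<in> I" "l \<le> r" for i l
    unfolding S_def by (rule holder_norm_le_one_plus_sum(2)[OF p0 I(1) _ that]) (fact bounded)
  have "dq_norms_le \<alpha> p0 N W S (u i)" if i: "i \<in> I" for i
    unfolding W_def
  proof (rule admissible_dq_norms_le_fact_weight[OF adm[OF i] S1 G(1)])
    show "holder_norm \<alpha> p0 (dq k (u i)) \<le> S" if "k < d" "k \<le> N" for k
      using S_ge[OF i] that d(2) by simp
  qed (use high i in auto)
  moreover have "(\<Sum>i=0..k. real (k choose i) * W i * W (k - i)) \<le> (12 * 2 ^ d * fact d) * W k" for k
  proof -
    have "0 \<le> G j" for j using G(1)[of j] by linarith
    then show ?thesis
      unfolding W_def by (rule fact_weight_convolution_le[OF d(1)]) (rule G(2))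
  qed
  ultimately have "dq_norms_le \<alpha> p0 N W ((12 * 2 ^ d * fact d) ^ (card I - 1) * S ^ card I) (\<lambda>x. \<Prod>i\<in>I. u i x)"
    using S1 I by (intro dq_norms_le_prod[OF p0]) auto
  then show ?thesis
    using n unfolding dq_norms_le_def W_def S_def by auto
qed

text \<open>The condition \<open>r \<le> N_min \<le> N\<close> ensures that the norms in the sum are norms of Hoelder functions,
  not junk values.\<close>

lemma holder_norm_dq_prod_estimate:
  fixes G E :: "real \<Rightarrow> nat \<Rightarrow> real"
  assumes p0: "p0 < 0" and d: "2 \<le> d" "d \<le> Suc r" and r: "r \<le> N_min" and m: "1 \<le> m" "m \<le> e"
    and G: "\<And>L k. 1 \<le> L \<Longrightarrow> 1 \<le> G L k" "\<And>L i j. 1 \<le> L \<Longrightarrow> G L i * G L j \<le> G L (i + j)"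
    and E: "\<And>L k. d \<le> k \<Longrightarrow> G L k = E L k"
  shows "\<exists>C > 1. \<forall>(N::nat) u L. N \<ge> N_min \<longrightarrow> (\<forall>i \<in> {1..m}. admissible \<alpha> p0 N (u i)) \<longrightarrow> 1 \<le> L \<longrightarrow>
     (\<forall>i \<in> {1..m}. \<forall>n \<in> {d..N}. holder_norm \<alpha> p0 (dq n (u i)) \<le> E L n * fact (n - d)) \<longrightarrow>
     (\<forall>n \<in> {d..N}. holder_norm \<alpha> p0 (dq n (\<lambda>x. \<Prod>i\<in>{1..m}. u i x))
        \<le> C * (1 + (\<Sum>i\<in>{1..m}. \<Sum>l\<le>r. holder_norm \<alpha> p0 (dq l (u i)))) ^ e * E L n * fact (n - d))"
proof (intro exI[of _ "(12 * 2 ^ d * fact d) ^ (m - 1) + 1"] conjI allI impI ballI)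
  define c :: real where "c = (12 * 2 ^ d * fact d) ^ (m - 1)"
  have c: "0 < c" unfolding c_def by simp
  then show "1 < (12 * 2 ^ d * fact d) ^ (m - 1) + (1::real)" unfolding c_def by simp
  fix N :: nat and u L n
  assume N: "N \<ge> N_min" and adm: "\<forall>i \<in> {1..m}. admissible \<alpha> p0 N (u i)" and L: "1 \<le> L"
    and hyp: "\<forall>i \<in> {1..m}. \<forall>n \<in> {d..N}. holder_norm \<alpha> p0 (dq n (u i)) \<le> E L n * fact (n - d)"
    and n: "n \<in> {d..N}"
  define S where "S = 1 + (\<Sum>i\<in>{1..m}. \<Sum>l\<le>r. holder_norm \<alpha> p0 (dq l (u i)))"
  have "holder_norm \<alpha> p0 (dq n (\<lambda>x. \<Prod>i\<in>{1..m}. u i x))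
      \<le> (12 * 2 ^ d * fact d) ^ (card {1..m} - 1) * S ^ card {1..m} * (G L n * fact (n - d))"
    unfolding S_def using r N m(1) G[OF L] adm hyp E n
    by (intro holder_norm_dq_prod_le[OF p0 d, where N = N]) auto
  then have "holder_norm \<alpha> p0 (dq n (\<lambda>x. \<Prod>i\<in>{1..m}. u i x)) \<le> c * S ^ m * (G L n * fact (n - d))"
    unfolding c_def by simp
  also have "\<dots> \<le> (c + 1) * S ^ e * (G L n * fact (n - d))"
  proof (rule mult_right_mono)
    have S1: "1 \<le> S"
      unfolding S_def using adm m(1) N r
      by (intro holder_norm_le_one_plus_sum(1)[OF p0 finite_atLeastAtMost])
        (auto simp: admissible_def intro: in_holder_imp_holder_bounded)
    then have "c * S ^ m \<le> c * S ^ e" using c m(2) by (intro mult_left_mono power_increasing) auto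
    also have "\<dots> \<le> (c + 1) * S ^ e" using S1 by (intro mult_right_mono) auto
    finally show "c * S ^ m \<le> (c + 1) * S ^ e" .
    show "0 \<le> G L n * fact (n - d)" using G(1)[OF L, of n] by simp
  qed
  finally show "holder_norm \<alpha> p0 (dq n (\<lambda>x. \<Prod>i\<in>{1..m}. u i x))
      \<le> ((12 * 2 ^ d * fact d) ^ (m - 1) + 1) * S ^ e * E L n * fact (n - d)"
    using n E unfolding c_def by (simp add: mult.assoc)
qed

lemma power_diff_growth:
  fixes L :: real
  assumes "1 \<le> L"
  shows "1 \<le> L ^ (k - s)" and "L ^ (i - s) * L ^ (j - s) \<le> L ^ (i + j - s)"
proof -
  show "1 \<le> L ^ (k - s)" using assms by simp
  have "L ^ (i - s) * L ^ (j - s) = L ^ (i - s + (j - s))" by (simp add: power_add)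
  also have "\<dots> \<le> L ^ (i + j - s)" using assms by (intro power_increasing) auto
  finally show "L ^ (i - s) * L ^ (j - s) \<le> L ^ (i + j - s)" .
qed

lemma powr_diff_growth:
  fixes L a :: real
  assumes L: "1 \<le> L" and a: "0 \<le> a" "a \<le> real d"
  defines "G \<equiv> \<lambda>k. if k < d then 1 else L powr (real k - a)"
  shows "1 \<le> G k" and "G i * G j \<le> G (i + j)"
proof -
  have ge: "1 \<le> G k" for k
    using L a unfolding G_def by (auto intro: ge_one_powr_ge_zero)
  then show "1 \<le> G k" .
  have mono: "G k \<le> G (k + l)" for k l
    using L a unfolding G_def by (auto intro: powr_mono ge_one_powr_ge_zero)
  show "G i * G j \<le> G (i + j)"
  proof (cases "i < d \<or> j < d")
    case True
    then show ?thesis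
      using mono[of i j] mono[of j i] by (auto simp: G_def add.commute)
  next
    case False
    then have "G i * G j = L powr (real i - a) * L powr (real j - a)"
      unfolding G_def by simp
    also have "\<dots> = L powr (real i - a + (real j - a))"
      by (rule powr_add[symmetric])
    also have "\<dots> \<le> L powr (real (i + j) - a)"
      using L a by (intro powr_mono) auto
    also have "\<dots> = G (i + j)"
      using False unfolding G_def by simp
    finally show ?thesis .
  qed
qed

theorem lemma2p2:
  fixes p0 \<alpha> :: real
  assumes "p0 < 0" and "0 < \<alpha>" and "\<alpha> < 1"
  shows
   "(\<exists>C0 > 1. \<forall>(N::nat) (u::nat \<Rightarrow> real \<times> real \<Rightarrow> real) (L::real).
       N \<ge> 3 \<longrightarrow> (\<forall>i \<in> {1..5}. admissible \<alpha> p0 N (u i)) \<longrightarrow> L \<ge> 1 \<longrightarrow>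
       (\<forall>i \<in> {1..5}. \<forall>n \<in> {2..N}.
          holder_norm \<alpha> p0 (dq n (u i)) \<le> L powr (real n - 3/2) * fact (n - 2)) \<longrightarrow>
       (\<forall>n \<in> {2..N}.
          holder_norm \<alpha> p0 (dq n (\<lambda>x. \<Prod>i\<in>{1..5}. u i x))
            \<le> C0 * (1 + (\<Sum>i\<in>{1..5}. \<Sum>l\<le>1. holder_norm \<alpha> p0 (dq l (u i)))) ^ 16
                 * L powr (real n - 3/2) * fact (n - 2)))
  \<and> (\<exists>C1 > 1. \<forall>(N::nat) (u::nat \<Rightarrow> real \<times> real \<Rightarrow> real) (L::real).
       N \<ge> 3 \<longrightarrow> (\<forall>i \<in> {1..3}. admissible \<alpha> p0 N (u i)) \<longrightarrow> L \<ge> 1 \<longrightarrow>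
       (\<forall>i \<in> {1..3}. \<forall>n \<in> {2..N}.
          holder_norm \<alpha> p0 (dq n (u i)) \<le> L ^ (n - 1) * fact (n - 2)) \<longrightarrow>
       (\<forall>n \<in> {2..N}.
          holder_norm \<alpha> p0 (dq n (\<lambda>x. \<Prod>i\<in>{1..3}. u i x))
            \<le> C1 * (1 + (\<Sum>i\<in>{1..3}. \<Sum>l\<le>1. holder_norm \<alpha> p0 (dq l (u i)))) ^ 6
                 * L ^ (n - 1) * fact (n - 2)))
  \<and> (\<exists>C2 > 1. \<forall>(N::nat) (u::nat \<Rightarrow> real \<times> real \<Rightarrow> real) (L::real).
       N \<ge> 3 \<longrightarrow> (\<forall>i \<in> {1..2}. admissible \<alpha> p0 N (u i)) \<longrightarrow> L \<ge> 1 \<longrightarrow>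
       (\<forall>i \<in> {1..2}. \<forall>n \<in> {3..N}.
          holder_norm \<alpha> p0 (dq n (u i)) \<le> L ^ (n - 2) * fact (n - 3)) \<longrightarrow>
       (\<forall>n \<in> {3..N}.
          holder_norm \<alpha> p0 (dq n (\<lambda>x. \<Prod>i\<in>{1..2}. u i x))
            \<le> C2 * (1 + (\<Sum>i\<in>{1..2}. \<Sum>l\<le>2. holder_norm \<alpha> p0 (dq l (u i)))) ^ 2
                 * L ^ (n - 2) * fact (n - 3)))"
proof (intro conjI)
  note estimate = holder_norm_dq_prod_estimate[OF assms(1), where N_min = 3]
  show "\<exists>C0 > 1. \<forall>(N::nat) (u::nat \<Rightarrow> real \<times> real \<Rightarrow> real) (L::real).
       N \<ge> 3 \<longrightarrow> (\<forall>i \<in> {1..5}. admissible \<alpha> p0 N (u i)) \<longrightarrow> L \<ge> 1 \<longrightarrow>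
       (\<forall>i \<in> {1..5}. \<forall>n \<in> {2..N}.
          holder_norm \<alpha> p0 (dq n (u i)) \<le> L powr (real n - 3/2) * fact (n - 2)) \<longrightarrow>
       (\<forall>n \<in> {2..N}.
          holder_norm \<alpha> p0 (dq n (\<lambda>x. \<Prod>i\<in>{1..5}. u i x))
            \<le> C0 * (1 + (\<Sum>i\<in>{1..5}. \<Sum>l\<le>1. holder_norm \<alpha> p0 (dq l (u i)))) ^ 16
                 * L powr (real n - 3/2) * fact (n - 2))"
    by (rule estimate[where G = "\<lambda>L k. if k < 2 then 1 else L powr (real k - 3/2)"])
      (auto intro: powr_diff_growth[where d = 2] split del: if_split)
  show "\<exists>C1 > 1. \<forall>(N::nat) (u::nat \<Rightarrow> real \<times> real \<Rightarrow> real) (L::real).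
       N \<ge> 3 \<longrightarrow> (\<forall>i \<in> {1..3}. admissible \<alpha> p0 N (u i)) \<longrightarrow> L \<ge> 1 \<longrightarrow>
       (\<forall>i \<in> {1..3}. \<forall>n \<in> {2..N}.
          holder_norm \<alpha> p0 (dq n (u i)) \<le> L ^ (n - 1) * fact (n - 2)) \<longrightarrow>
       (\<forall>n \<in> {2..N}.
          holder_norm \<alpha> p0 (dq n (\<lambda>x. \<Prod>i\<in>{1..3}. u i x))
            \<le> C1 * (1 + (\<Sum>i\<in>{1..3}. \<Sum>l\<le>1. holder_norm \<alpha> p0 (dq l (u i)))) ^ 6
                 * L ^ (n - 1) * fact (n - 2))"
    by (rule estimate[where G = "\<lambda>L k. L ^ (k - 1)"]) (auto intro: power_diff_growth)
  show "\<exists>C2 > 1. \<forall>(N::nat) (u::nat \<Rightarrow> real \<times> real \<Rightarrow> real) (L::real).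
       N \<ge> 3 \<longrightarrow> (\<forall>i \<in> {1..2}. admissible \<alpha> p0 N (u i)) \<longrightarrow> L \<ge> 1 \<longrightarrow>
       (\<forall>i \<in> {1..2}. \<forall>n \<in> {3..N}.
          holder_norm \<alpha> p0 (dq n (u i)) \<le> L ^ (n - 2) * fact (n - 3)) \<longrightarrow>
       (\<forall>n \<in> {3..N}.
          holder_norm \<alpha> p0 (dq n (\<lambda>x. \<Prod>i\<in>{1..2}. u i x))
            \<le> C2 * (1 + (\<Sum>i\<in>{1..2}. \<Sum>l\<le>2. holder_norm \<alpha> p0 (dq l (u i)))) ^ 2
                 * L ^ (n - 2) * fact (n - 3))"
    by (rule estimate[where G = "\<lambda>L k. L ^ (k - 2)"]) (auto intro: power_diff_growth)
qed

end
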